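(* Let $\Gamma$ be a Fuchsian group and let $z_0\in\mathbb{H}^2$ be a point not fixed by any non-identity element of $\Gamma$. Define $B_\Gamma(z_0)=\bigcup_{z\in D_\Gamma(z_0)}D_\Gamma(z)$ and $U_\Gamma(z_0)=\{\gamma\in\Gamma:\ \gamma\cdot D_\Gamma(z_0)\cap B_\Gamma(z_0)\neq\emptyset\}$. Then $U_\Gamma(z_0)$ is a geodesic cover of $\Gamma$ corresponding to the fundamental domain $D_\Gamma(z_0)$.
   Context: $\Gamma$ acts on the upper half plane $\mathbb{H}^2$ by Möbius transformations; $d_{\mathbb{H}^2}$ is the hyperbolic metric. For $w\in\mathbb{H}^2$, the Dirichlet domain is $D_\Gamma(w)=\{z\in\mathbb{H}^2: d_{\mathbb{H}^2}(z,w)\leq d_{\mathbb{H}^2}(z,\gamma\cdot w)\ \forall\gamma\in\Gamma\}$; when $w$ is not fixed by a non-identity element it is a fundamental domain. A subset $\Gamma_0\subset\Gamma$ containing the identity is a geodesic cover of $\Gamma$ corresponding to a fundamental domain $F$ if for all $p,q\in F$, $\min_{\gamma\in\Gamma}d_{\mathbb{H}^2}(p,\gamma\cdot q)=\min_{\gamma\in\Gamma_0}d_{\mathbb{H}^2}(p,\gamma\cdot q)$. *)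

theory Defs
  imports "HOL-Analysis.Analysis"
begin

text \<open>A Fuchsian group is a discrete subgroup of PSL(2,R); we represent it by its preimage,
  a discrete subgroup of SL(2,R) (the action on the upper half plane is the same).\<close>

type_synonym mat2 = "real \<times> real \<times> real \<times> real"

definition upper_half_plane :: "complex set" where
  "upper_half_plane = {z. Im z > 0}"

definition mat_mult :: "mat2 \<Rightarrow> mat2 \<Rightarrow> mat2" where
  "mat_mult A B = (case A of (a,b,c,d) \<Rightarrow> case B of (e,f,g,h) \<Rightarrow>
      (a*e + b*g, a*f + b*h, c*e + d*g, c*f + d*h))"

definition mat_det :: "mat2 \<Rightarrow> real" where
  "mat_det A = (case A of (a,b,c,d) \<Rightarrow> a*d - b*c)"

definition mat_inv :: "mat2 \<Rightarrow> mat2" where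
  "mat_inv A = (case A of (a,b,c,d) \<Rightarrow> (d, -b, -c, a))"

definition mat_id :: mat2 where
  "mat_id = (1, 0, 0, 1)"

definition moeb :: "mat2 \<Rightarrow> complex \<Rightarrow> complex" where
  "moeb A z = (case A of (a,b,c,d) \<Rightarrow>
      (of_real a * z + of_real b) / (of_real c * z + of_real d))"

definition fuchsian_group :: "mat2 set \<Rightarrow> bool" where
  "fuchsian_group \<Gamma> \<longleftrightarrow>
     (\<forall>g\<in>\<Gamma>. mat_det g = 1) \<and> mat_id \<in> \<Gamma> \<and>
     (\<forall>g\<in>\<Gamma>. \<forall>h\<in>\<Gamma>. mat_mult g h \<in> \<Gamma>) \<and> (\<forall>g\<in>\<Gamma>. mat_inv g \<in> \<Gamma>) \<and>
     (\<forall>g\<in>\<Gamma>. \<exists>e>0. \<forall>h\<in>\<Gamma>. dist h g < e \<longrightarrow> h = g)"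

definition hdist :: "complex \<Rightarrow> complex \<Rightarrow> real" where
  "hdist z w = arcosh (1 + (cmod (z - w))\<^sup>2 / (2 * Im z * Im w))"

definition acts_trivially :: "mat2 \<Rightarrow> bool" where
  "acts_trivially g \<longleftrightarrow> (\<forall>z\<in>upper_half_plane. moeb g z = z)"

definition dirichlet_domain :: "mat2 set \<Rightarrow> complex \<Rightarrow> complex set" where
  "dirichlet_domain \<Gamma> w = {z \<in> upper_half_plane. \<forall>\<gamma>\<in>\<Gamma>. hdist z w \<le> hdist z (moeb \<gamma> w)}"

definition B_set :: "mat2 set \<Rightarrow> complex \<Rightarrow> complex set" where
  "B_set \<Gamma> z0 = (\<Union>z\<in>dirichlet_domain \<Gamma> z0. dirichlet_domain \<Gamma> z)"

definition U_set :: "mat2 set \<Rightarrow> complex \<Rightarrow> mat2 set" where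
  "U_set \<Gamma> z0 = {\<gamma>\<in>\<Gamma>. moeb \<gamma> ` dirichlet_domain \<Gamma> z0 \<inter> B_set \<Gamma> z0 \<noteq> {}}"

definition geodesic_cover :: "mat2 set \<Rightarrow> mat2 set \<Rightarrow> complex set \<Rightarrow> bool" where
  "geodesic_cover \<Gamma> \<Gamma>0 F \<longleftrightarrow> \<Gamma>0 \<subseteq> \<Gamma> \<and> mat_id \<in> \<Gamma>0 \<and>
     (\<forall>p\<in>F. \<forall>q\<in>F.
        (\<exists>\<gamma>\<in>\<Gamma>. hdist p (moeb \<gamma> q) = (INF g\<in>\<Gamma>. hdist p (moeb g q))) \<and>
        (\<exists>\<gamma>\<in>\<Gamma>0. hdist p (moeb \<gamma> q) = (INF g\<in>\<Gamma>0. hdist p (moeb g q))) \<and>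
        (INF g\<in>\<Gamma>. hdist p (moeb g q)) = (INF g\<in>\<Gamma>0. hdist p (moeb g q)))"

end

theory Submission
  imports Defs
begin

text \<open>For p, q in D(z0) choose \<gamma> \<in> \<Gamma> with \<gamma> q nearest to p; it exists because the
  elements of SL(2,R) moving q into a fixed hyperbolic ball around p form a bounded set, of which
  a discrete group meets only finitely many points. Minimality and the invariance of the metric
  give d(\<gamma> q, p) \<le> d(\<gamma> q, \<delta> p) for all \<delta> \<in> \<Gamma>, i.e. \<gamma> q \<in> D(p) \<subseteq> B(z0). As also
  \<gamma> q \<in> \<gamma> D(z0), \<gamma> lies in U(z0), so the minimum over U(z0) equals that over \<Gamma>.\<close>

lemma moeb_denom_nonzero:
  assumes "Im z > 0" "a*d - b*c = (1::real)"
  shows "of_real c * z + of_real d \<noteq> 0"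
proof
  assume h: "of_real c * z + of_real d = 0"
  then have "Im (of_real c * z + of_real d) = 0" by simp
  then have "c = 0" using assms(1) by simp
  with h assms(2) show False by simp
qed

lemma Im_moeb:
  assumes "Im z > 0" "a*d - b*c = (1::real)"
  shows "Im (moeb (a,b,c,d) z) = Im z / (cmod (of_real c * z + of_real d))\<^sup>2"
proof -
  have "Im (moeb (a,b,c,d) z) = (Im (of_real a * z + of_real b) * Re (of_real c * z + of_real d) -
        Re (of_real a * z + of_real b) * Im (of_real c * z + of_real d)) / (cmod (of_real c * z + of_real d))\<^sup>2"
    unfolding moeb_def by (simp add: Im_divide cmod_power2)
  also have "\<dots> = (a*d - b*c) * Im z / (cmod (of_real c * z + of_real d))\<^sup>2"
    by (simp add: algebra_simps)
  finally show ?thesis using assms by simp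
qed

lemma moeb_diff:
  assumes "Im z > 0" "Im w > 0" "a*d - b*c = (1::real)"
  shows "moeb (a,b,c,d) z - moeb (a,b,c,d) w =
    (z - w) / ((of_real c * z + of_real d) * (of_real c * w + of_real d))"
proof -
  have "complex_of_real a * complex_of_real d - complex_of_real b * complex_of_real c = 1"
    by (metis assms(3) of_real_1 of_real_diff of_real_mult)
  with moeb_denom_nonzero[OF assms(1,3)] moeb_denom_nonzero[OF assms(2,3)] show ?thesis
    unfolding moeb_def by (simp add: field_simps)
qed

lemma mat_det_mat_mult: "mat_det (mat_mult A B) = mat_det A * mat_det B"
  by (cases A; cases B) (simp add: mat_det_def mat_mult_def algebra_simps)

lemma Im_moeb_pos:
  assumes "mat_det g = 1" "Im z > 0"
  shows "Im (moeb g z) > 0"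
proof (cases g)
  case (fields a b c d)
  with assms show ?thesis
    using Im_moeb[of z a d b c] moeb_denom_nonzero[of z a d b c] by (simp add: mat_det_def)
qed

lemma moeb_mat_mult:
  assumes "mat_det A = 1" "mat_det B = 1" "Im z > 0"
  shows "moeb (mat_mult A B) z = moeb A (moeb B z)"
proof -
  obtain a b c d e f g h where AB: "A = (a,b,c,d)" "B = (e,f,g,h)"
    by (metis prod.exhaust)
  have "mat_det (mat_mult A B) = 1" using assms by (simp add: mat_det_mat_mult)
  then have "(a*e + b*g) * (c*f + d*h) - (a*f + b*h) * (c*e + d*g) = 1"
    by (simp add: AB mat_det_def mat_mult_def)
  from moeb_denom_nonzero[OF assms(3) this] moeb_denom_nonzero[of z e h f g] assms
  show ?thesis
    unfolding AB moeb_def mat_mult_def mat_det_def by (simp add: divide_simps) (simp add: algebra_simps)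
qed

lemma hdist_moeb:
  assumes "mat_det g = 1" "Im z > 0" "Im w > 0"
  shows "hdist (moeb g z) (moeb g w) = hdist z w"
proof -
  obtain a b c d where g: "g = (a,b,c,d)" by (metis prod.exhaust)
  have det: "a*d - b*c = 1" using assms(1) by (simp add: g mat_det_def)
  define N1 where "N1 = cmod (of_real c * z + of_real d)"
  define N2 where "N2 = cmod (of_real c * w + of_real d)"
  have "N1 > 0" "N2 > 0"
    unfolding N1_def N2_def using moeb_denom_nonzero assms(2,3) det by auto
  moreover have diff: "cmod (moeb g z - moeb g w) = cmod (z - w) / (N1 * N2)"
    unfolding g moeb_diff[OF assms(2,3) det] N1_def N2_def by (simp add: norm_divide norm_mult)
  moreover have Im_eq: "Im (moeb g z) = Im z / N1\<^sup>2" "Im (moeb g w) = Im w / N2\<^sup>2"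
    unfolding g N1_def N2_def using Im_moeb assms det by blast+
  ultimately have "(cmod (moeb g z - moeb g w))\<^sup>2 / (2 * Im (moeb g z) * Im (moeb g w))
      = (cmod (z - w))\<^sup>2 / (2 * Im z * Im w)"
    unfolding diff Im_eq using assms by (simp add: field_simps power2_eq_square)
  then show ?thesis unfolding hdist_def by simp
qed

lemma moeb_mat_id: "moeb mat_id z = z"
  by (simp add: moeb_def mat_id_def)

lemma mat_mult_mat_id: "mat_mult g mat_id = g"
  by (cases g) (simp add: mat_mult_def mat_id_def)

lemma mat_mult_mat_inv_cancel:
  assumes "mat_det g = 1"
  shows "mat_mult g (mat_mult (mat_inv g) h) = h"
proof -
  obtain a b c d a' b' c' d' where "g = (a,b,c,d)" "h = (a',b',c',d')"
    by (metis prod.exhaust)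
  with assms show ?thesis
    by (simp add: mat_mult_def mat_inv_def mat_det_def algebra_simps)
       (metis (no_types) mult.left_commute distrib_left mult.commute mult_1_right)
qed

lemma fuchsian_groupD:
  assumes "fuchsian_group \<Gamma>"
  shows "\<And>g. g \<in> \<Gamma> \<Longrightarrow> mat_det g = 1" "mat_id \<in> \<Gamma>"
    "\<And>g h. g \<in> \<Gamma> \<Longrightarrow> h \<in> \<Gamma> \<Longrightarrow> mat_mult g h \<in> \<Gamma>"
    "\<And>g. g \<in> \<Gamma> \<Longrightarrow> mat_inv g \<in> \<Gamma>"
    "\<exists>e>0. \<forall>h\<in>\<Gamma>. dist h mat_id < e \<longrightarrow> h = mat_id"
  using assms unfolding fuchsian_group_def by blast+

lemma norm_mat2_le: "norm ((a,b,c,d)::mat2) \<le> \<bar>a\<bar> + \<bar>b\<bar> + \<bar>c\<bar> + \<bar>d\<bar>"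
proof -
  have "norm ((a,b,c,d)::mat2) \<le> norm a + norm (b,c,d)" by (rule norm_Pair_le)
  also have "norm (b,c,d) \<le> norm b + norm (c,d)" by (rule norm_Pair_le)
  also have "norm (c,d) \<le> norm c + norm d" by (rule norm_Pair_le)
  finally show ?thesis by simp
qed

lemma abs_entries_le_norm_mat2:
  fixes a b c d :: real
  shows "\<bar>a\<bar> \<le> norm (a,b,c,d)" "\<bar>b\<bar> \<le> norm (a,b,c,d)"
    "\<bar>c\<bar> \<le> norm (a,b,c,d)" "\<bar>d\<bar> \<le> norm (a,b,c,d)"
proof -
  have "norm a \<le> norm (a,b,c,d)" "norm (b,c,d) \<le> norm (a,b,c,d)"
    "norm b \<le> norm (b,c,d)" "norm (c,d) \<le> norm (b,c,d)"
    "norm c \<le> norm (c,d)" "norm d \<le> norm (c,d)"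
    by (rule norm_fst_le norm_snd_le)+
  then show "\<bar>a\<bar> \<le> norm (a,b,c,d)" "\<bar>b\<bar> \<le> norm (a,b,c,d)"
    "\<bar>c\<bar> \<le> norm (a,b,c,d)" "\<bar>d\<bar> \<le> norm (a,b,c,d)"
    unfolding real_norm_def by linarith+
qed

lemma abs_mult_diff_le:
  fixes x y u v M D :: real
  assumes "\<bar>x\<bar> \<le> M" "\<bar>y\<bar> \<le> M" "\<bar>u\<bar> \<le> D" "\<bar>v\<bar> \<le> D"
  shows "\<bar>x * u - y * v\<bar> \<le> 2 * M * D"
proof -
  have "\<bar>x * u - y * v\<bar> \<le> \<bar>x\<bar> * \<bar>u\<bar> + \<bar>y\<bar> * \<bar>v\<bar>"
    by (simp add: abs_mult[symmetric] abs_triangle_ineq4)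
  also have "\<dots> \<le> M * D + M * D" using assms by (intro add_mono mult_mono) auto
  finally show ?thesis by linarith
qed

lemma dist_mat_inv_mult_mat_id:
  assumes "mat_det g = 1"
  shows "dist (mat_mult (mat_inv g) h) mat_id \<le> 8 * norm g * dist h g"
proof -
  obtain a b c d a' b' c' d' where g: "g = (a,b,c,d)" and h: "h = (a',b',c',d')"
    by (metis prod.exhaust)
  have det: "a*d - b*c = 1" using assms by (simp add: g mat_det_def)
  have entries: "mat_mult (mat_inv g) h - mat_id = (d*(a'-a) - b*(c'-c), d*(b'-b) - b*(d'-d),
      a*(c'-c) - c*(a'-a), a*(d'-d) - c*(b'-b))"
    using det by (simp add: g h mat_mult_def mat_inv_def mat_id_def algebra_simps)
  have "dist h g = norm (a'-a, b'-b, c'-c, d'-d)" by (simp add: g h dist_norm)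
  note g_le = abs_entries_le_norm_mat2[where a=a and b=b and c=c and d=d, folded g]
    and hg_le = abs_entries_le_norm_mat2[where a="a'-a" and b="b'-b" and c="c'-c" and d="d'-d", folded this]
  have "dist (mat_mult (mat_inv g) h) mat_id \<le>
      2 * norm g * dist h g + 2 * norm g * dist h g + 2 * norm g * dist h g + 2 * norm g * dist h g"
    unfolding dist_norm[of _ mat_id] entries
    by (rule order_trans[OF norm_mat2_le], intro add_mono abs_mult_diff_le g_le hg_le)
  then show ?thesis by simp
qed

lemma fuchsian_bounded_subset_finite:
  assumes G: "fuchsian_group \<Gamma>" and "S \<subseteq> \<Gamma>" "bounded S"
  shows "finite S"
proof -
  obtain M where M: "M > 0" "\<And>g. g \<in> S \<Longrightarrow> norm g \<le> M"
    using \<open>bounded S\<close> bounded_pos by blast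
  obtain e where e: "e > 0" "\<And>k. k \<in> \<Gamma> \<Longrightarrow> dist k mat_id < e \<Longrightarrow> k = mat_id"
    using fuchsian_groupD(5)[OF G] by blast
  have "uniform_discrete S"
    unfolding uniform_discrete_def
  proof (intro exI[of _ "e / (8*M)"] conjI ballI impI)
    show "e / (8*M) > 0" using e M by simp
    fix g h assume "g \<in> S" "h \<in> S" and close: "dist g h < e / (8*M)"
    then have gh: "g \<in> \<Gamma>" "h \<in> \<Gamma>" using \<open>S \<subseteq> \<Gamma>\<close> by auto
    have "dist (mat_mult (mat_inv g) h) mat_id \<le> 8 * norm g * dist h g"
      using dist_mat_inv_mult_mat_id fuchsian_groupD(1)[OF G gh(1)] .
    also have "\<dots> \<le> 8 * M * dist h g"
      using M \<open>g \<in> S\<close> by (simp add: mult_right_mono)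
    also have "\<dots> < e"
      using close M by (simp add: dist_commute pos_less_divide_eq mult.commute)
    finally have "mat_mult (mat_inv g) h = mat_id"
      using e fuchsian_groupD(3,4)[OF G] gh by blast
    then show "g = h"
      using mat_mult_mat_inv_cancel[OF fuchsian_groupD(1)[OF G gh(1)], of h]
      by (simp add: mat_mult_mat_id)
  qed
  with \<open>bounded S\<close> show ?thesis using uniform_discrete_finite_iff by blast
qed

lemma hdist_nonneg: "Im z > 0 \<Longrightarrow> Im w > 0 \<Longrightarrow> hdist z w \<ge> 0"
  unfolding hdist_def by (intro arcosh_nonneg_real) simp

lemma hdist_self: "hdist z z = 0"
  unfolding hdist_def by simp

lemma hdist_commute: "hdist z w = hdist w z"
  unfolding hdist_def by (simp add: norm_minus_commute mult.commute mult.left_commute)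

lemma hdist_le_imp_cmod_le:
  assumes "Im p > 0" "Im w > 0" "hdist p w \<le> r"
  shows "(cmod (p - w))\<^sup>2 \<le> 2 * (cosh r - 1) * Im p * Im w"
proof -
  define X where "X = (cmod (p - w))\<^sup>2 / (2 * Im p * Im w)"
  have X: "X \<ge> 0" unfolding X_def using assms by simp
  have "hdist p w = arcosh (1 + X)" unfolding hdist_def X_def ..
  moreover have "arcosh (1 + X) \<ge> 0" using X by simp
  ultimately have "cosh (arcosh (1 + X)) \<le> cosh r"
    using assms(3) by (subst cosh_real_nonneg_le_iff) auto
  with X have "X \<le> cosh r - 1" by simp
  then show ?thesis
    using assms(1,2) unfolding X_def by (subst (asm) pos_divide_le_eq) (auto simp: mult_ac)
qed

lemma sq_diff_le_imp_le:
  fixes x y K :: real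
  assumes "x \<ge> 0" "y > 0" "K \<ge> 0" "(x - y)\<^sup>2 \<le> 2 * K * x * y"
  shows "y \<le> (2 + 8*K) * x"
proof (cases "y \<le> 2 * x")
  case True
  moreover have "0 \<le> K * x" using assms by simp
  ultimately show ?thesis by (simp add: algebra_simps)
next
  case False
  then have "(y / 2)\<^sup>2 \<le> (y - x)\<^sup>2"
    using assms(2) by (intro power_mono) auto
  then have "(y / 2)\<^sup>2 \<le> (x - y)\<^sup>2"
    by (simp add: power2_commute)
  with assms(4) have "y * y \<le> y * (8 * K * x)" by (simp add: power2_eq_square algebra_simps)
  with assms show ?thesis by (simp add: algebra_simps)
qed

lemma hyperbolic_ball_bounded:
  assumes "Im p > 0"
  obtains m M where "m > 0" "\<And>w. Im w > 0 \<Longrightarrow> hdist p w \<le> r \<Longrightarrow> m \<le> Im w \<and> cmod w \<le> M"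
proof
  define K where "K = cosh r - 1"
  have K: "K \<ge> 0" unfolding K_def using cosh_real_ge_1[of r] by simp
  show "Im p / (2 + 8*K) > 0" using assms K by simp
  fix w assume w: "Im w > 0" "hdist p w \<le> r"
  have close: "(cmod (p - w))\<^sup>2 \<le> 2 * K * Im p * Im w"
    unfolding K_def using hdist_le_imp_cmod_le[OF assms w] .
  have "(Im p - Im w)\<^sup>2 \<le> (cmod (p - w))\<^sup>2"
    using abs_Im_le_cmod[of "p - w"] by (metis minus_complex.sel(2) abs_ge_zero power2_abs power_mono)
  with close have Im_close: "(Im p - Im w)\<^sup>2 \<le> 2 * K * Im p * Im w" "(Im w - Im p)\<^sup>2 \<le> 2 * K * Im w * Im p"
    by (simp_all add: power2_commute mult_ac)
  have "Im p \<le> (2 + 8*K) * Im w"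
    using sq_diff_le_imp_le[OF _ assms K Im_close(2)] w by simp
  then have "Im p / (2 + 8*K) \<le> Im w"
    using K by (simp add: divide_le_eq mult.commute)
  have "Im w \<le> (2 + 8*K) * Im p"
    using sq_diff_le_imp_le[OF _ w(1) K Im_close(1)] assms by simp
  then have "2 * K * Im p * Im w \<le> 2 * K * Im p * ((2 + 8*K) * Im p)"
    using K assms by (intro mult_left_mono) auto
  with close have "(cmod (p - w))\<^sup>2 \<le> 2 * K * Im p * ((2 + 8*K) * Im p)"
    by linarith
  then have "cmod (p - w) \<le> sqrt (2 * K * Im p * ((2 + 8*K) * Im p))"
    by (simp add: real_le_rsqrt)
  moreover have "cmod w \<le> cmod p + cmod (p - w)"
    by (metis norm_triangle_sub norm_minus_commute)
  ultimately show "Im p / (2 + 8*K) \<le> Im w \<and> cmod w \<le> cmod p + sqrt (2 * K * Im p * ((2 + 8*K) * Im p))"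
    using \<open>Im p / (2 + 8*K) \<le> Im w\<close> by simp
qed

lemma abs_real_coeffs_le:
  assumes "Im q > 0" "cmod (of_real c * q + of_real d) \<le> R"
  shows "\<bar>c\<bar> \<le> R / Im q" "\<bar>d\<bar> \<le> R / Im q * \<bar>Re q\<bar> + R"
proof -
  have "\<bar>c * Im q\<bar> \<le> R"
    using abs_Im_le_cmod[of "of_real c * q + of_real d"] assms(2) by simp
  then show c: "\<bar>c\<bar> \<le> R / Im q"
    using assms(1) by (simp add: le_divide_eq abs_mult)
  have "\<bar>c * Re q + d\<bar> \<le> R"
    using abs_Re_le_cmod[of "of_real c * q + of_real d"] assms(2) by simp
  moreover have "\<bar>d\<bar> \<le> \<bar>c * Re q + d\<bar> + \<bar>c\<bar> * \<bar>Re q\<bar>"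
    by (simp add: abs_mult[symmetric] abs_triangle_ineq4[of "c * Re q + d" "c * Re q", simplified])
  moreover have "\<bar>c\<bar> * \<bar>Re q\<bar> \<le> R / Im q * \<bar>Re q\<bar>"
    using c by (intro mult_right_mono) auto
  ultimately show "\<bar>d\<bar> \<le> R / Im q * \<bar>Re q\<bar> + R"
    by linarith
qed

lemma bounded_sl2_into_hyperbolic_ball:
  assumes "Im p > 0" "Im q > 0"
  shows "bounded {g. mat_det g = 1 \<and> hdist p (moeb g q) \<le> r}"
proof -
  obtain m M where m: "m > 0" and ball: "\<And>w. Im w > 0 \<Longrightarrow> hdist p w \<le> r \<Longrightarrow> m \<le> Im w \<and> cmod w \<le> M"
    using hyperbolic_ball_bounded[OF assms(1)] by blast
  define R1 where "R1 = sqrt (Im q / m)"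
  define R2 where "R2 = M * R1"
  define B where "B = R1 / Im q + (R1 / Im q * \<bar>Re q\<bar> + R1) + R2 / Im q + (R2 / Im q * \<bar>Re q\<bar> + R2)"
  have "norm g \<le> B" if "mat_det g = 1" "hdist p (moeb g q) \<le> r" for g
  proof -
    obtain a b c d where g: "g = (a,b,c,d)" by (metis prod.exhaust)
    have det: "a*d - b*c = 1" using that(1) by (simp add: g mat_det_def)
    define w where "w = moeb g q"
    define N where "N = of_real c * q + of_real d"
    have N: "N \<noteq> 0" unfolding N_def using moeb_denom_nonzero[OF assms(2) det] .
    have w: "Im w > 0" unfolding w_def using Im_moeb_pos[OF that(1) assms(2)] .
    with that(2) have "m \<le> Im w" "cmod w \<le> M" using ball unfolding w_def by blast+
    have "Im w = Im q / (cmod N)\<^sup>2"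
      unfolding w_def g N_def by (rule Im_moeb[OF assms(2) det])
    then have "(cmod N)\<^sup>2 = Im q / Im w"
      using N w by (simp add: field_simps)
    also have "\<dots> \<le> Im q / m" using \<open>m \<le> Im w\<close> m assms(2) by (intro divide_left_mono) auto
    finally have N_le: "cmod N \<le> R1" unfolding R1_def by (simp add: real_le_rsqrt)
    have "of_real a * q + of_real b = w * N"
      using N unfolding w_def N_def g moeb_def by simp
    then have "cmod (of_real a * q + of_real b) = cmod w * cmod N" by (simp add: norm_mult)
    also have "\<dots> \<le> R2"
      unfolding R2_def using \<open>cmod w \<le> M\<close> N_le by (intro mult_mono) (auto intro: order_trans[OF norm_ge_zero])
    finally have "cmod (of_real a * q + of_real b) \<le> R2" .
    with abs_real_coeffs_le[OF assms(2)] abs_real_coeffs_le[OF assms(2) N_le[unfolded N_def]]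
    show ?thesis
      using norm_mat2_le[of a b c d] unfolding g B_def by fastforce
  qed
  then show ?thesis unfolding bounded_iff by blast
qed

lemma fuchsian_nearest_orbit_point:
  assumes G: "fuchsian_group \<Gamma>" and "Im p > 0" "Im q > 0"
  obtains \<gamma> where "\<gamma> \<in> \<Gamma>" "\<And>g. g \<in> \<Gamma> \<Longrightarrow> hdist p (moeb \<gamma> q) \<le> hdist p (moeb g q)"
proof -
  define f where "f g = hdist p (moeb g q)" for g
  define S where "S = {g\<in>\<Gamma>. f g \<le> f mat_id}"
  have "S \<subseteq> {g. mat_det g = 1 \<and> hdist p (moeb g q) \<le> hdist p q}"
    unfolding S_def f_def using fuchsian_groupD(1)[OF G] by (auto simp: moeb_mat_id)
  then have "finite S"
    using bounded_sl2_into_hyperbolic_ball[OF assms(2,3)] S_def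
    by (intro fuchsian_bounded_subset_finite[OF G]) (auto intro: bounded_subset)
  moreover have "mat_id \<in> S"
    unfolding S_def using fuchsian_groupD(2)[OF G] by simp
  ultimately obtain \<gamma> where \<gamma>: "\<gamma> \<in> S" "\<And>g. g \<in> S \<Longrightarrow> \<not> f g < f \<gamma>"
    using ex_is_arg_min_if_finite[of S f] unfolding is_arg_min_def by blast
  show ?thesis
  proof
    show "\<gamma> \<in> \<Gamma>" using \<gamma>(1) unfolding S_def by simp
    fix g assume "g \<in> \<Gamma>"
    moreover have "f \<gamma> \<le> f mat_id" using \<gamma>(1) unfolding S_def by simp
    ultimately show "hdist p (moeb \<gamma> q) \<le> hdist p (moeb g q)"
      using \<gamma>(2)[of g] unfolding S_def f_def[symmetric] by force
  qed
qed

lemma nearest_orbit_point_in_dirichlet_domain: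
  assumes G: "fuchsian_group \<Gamma>" and p: "Im p > 0" and q: "Im q > 0" and "\<gamma> \<in> \<Gamma>"
    and nearest: "\<And>g. g \<in> \<Gamma> \<Longrightarrow> hdist p (moeb \<gamma> q) \<le> hdist p (moeb g q)"
  shows "moeb \<gamma> q \<in> dirichlet_domain \<Gamma> p"
  unfolding dirichlet_domain_def upper_half_plane_def
proof (intro CollectI conjI ballI)
  note det = fuchsian_groupD(1)[OF G]
  show "Im (moeb \<gamma> q) > 0" using Im_moeb_pos[OF det[OF \<open>\<gamma> \<in> \<Gamma>\<close>] q] .
  fix \<delta> assume "\<delta> \<in> \<Gamma>"
  define g where "g = mat_mult (mat_inv \<delta>) \<gamma>"
  have g: "g \<in> \<Gamma>" unfolding g_def using fuchsian_groupD(3,4)[OF G] \<open>\<gamma> \<in> \<Gamma>\<close> \<open>\<delta> \<in> \<Gamma>\<close> by blast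
  have "moeb \<gamma> q = moeb \<delta> (moeb g q)"
    using mat_mult_mat_inv_cancel[OF det[OF \<open>\<delta> \<in> \<Gamma>\<close>], of \<gamma>] moeb_mat_mult[OF det[OF \<open>\<delta> \<in> \<Gamma>\<close>] det[OF g] q]
    by (simp add: g_def)
  then have "hdist (moeb \<gamma> q) (moeb \<delta> p) = hdist p (moeb g q)"
    using hdist_moeb[OF det[OF \<open>\<delta> \<in> \<Gamma>\<close>] p Im_moeb_pos[OF det[OF g] q]] by (simp add: hdist_commute)
  then show "hdist (moeb \<gamma> q) p \<le> hdist (moeb \<gamma> q) (moeb \<delta> p)"
    using nearest[OF g] by (simp add: hdist_commute)
qed

lemma geodesic_coverI:
  assumes "\<Gamma>0 \<subseteq> \<Gamma>" "mat_id \<in> \<Gamma>0"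
    and nearest: "\<And>p q. p \<in> F \<Longrightarrow> q \<in> F \<Longrightarrow>
      \<exists>\<gamma>\<in>\<Gamma>0. \<forall>g\<in>\<Gamma>. hdist p (moeb \<gamma> q) \<le> hdist p (moeb g q)"
  shows "geodesic_cover \<Gamma> \<Gamma>0 F"
proof -
  have "(\<exists>\<gamma>\<in>\<Gamma>. hdist p (moeb \<gamma> q) = (INF g\<in>\<Gamma>. hdist p (moeb g q))) \<and>
      (\<exists>\<gamma>\<in>\<Gamma>0. hdist p (moeb \<gamma> q) = (INF g\<in>\<Gamma>0. hdist p (moeb g q))) \<and>
      (INF g\<in>\<Gamma>. hdist p (moeb g q)) = (INF g\<in>\<Gamma>0. hdist p (moeb g q))"
    if pq: "p \<in> F" "q \<in> F" for p q
  proof -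
    obtain \<gamma> where "\<gamma> \<in> \<Gamma>0" and "\<And>g. g \<in> \<Gamma> \<Longrightarrow> hdist p (moeb \<gamma> q) \<le> hdist p (moeb g q)"
      using nearest[OF pq] by blast
    then have "(INF g\<in>\<Gamma>. hdist p (moeb g q)) = hdist p (moeb \<gamma> q)"
      "(INF g\<in>\<Gamma>0. hdist p (moeb g q)) = hdist p (moeb \<gamma> q)"
      using \<open>\<Gamma>0 \<subseteq> \<Gamma>\<close> by (auto intro!: cInf_eq_minimum)
    with \<open>\<gamma> \<in> \<Gamma>0\<close> \<open>\<Gamma>0 \<subseteq> \<Gamma>\<close> show ?thesis by auto
  qed
  with assms(1,2) show ?thesis unfolding geodesic_cover_def by blast
qed

theorem proposition2p2:
  fixes \<Gamma> :: "mat2 set" and z0 :: complex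
  assumes "fuchsian_group \<Gamma>"
    and "z0 \<in> upper_half_plane"
    and "\<forall>g\<in>\<Gamma>. moeb g z0 = z0 \<longrightarrow> acts_trivially g"
  shows "geodesic_cover \<Gamma> (U_set \<Gamma> z0) (dirichlet_domain \<Gamma> z0)"
proof (rule geodesic_coverI)
  note G = assms(1)
  show "U_set \<Gamma> z0 \<subseteq> \<Gamma>" unfolding U_set_def by blast
  have "z0 \<in> dirichlet_domain \<Gamma> z0"
    using assms(2) fuchsian_groupD(1)[OF G]
    by (auto simp: dirichlet_domain_def upper_half_plane_def hdist_self intro!: hdist_nonneg Im_moeb_pos)
  then show "mat_id \<in> U_set \<Gamma> z0"
    using fuchsian_groupD(2)[OF G] by (auto simp: U_set_def B_set_def moeb_mat_id)
  fix p q assume pq: "p \<in> dirichlet_domain \<Gamma> z0" "q \<in> dirichlet_domain \<Gamma> z0"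
  then have H: "Im p > 0" "Im q > 0"
    unfolding dirichlet_domain_def upper_half_plane_def by auto
  obtain \<gamma> where "\<gamma> \<in> \<Gamma>" and nearest: "\<And>g. g \<in> \<Gamma> \<Longrightarrow> hdist p (moeb \<gamma> q) \<le> hdist p (moeb g q)"
    using fuchsian_nearest_orbit_point[OF G H] by blast
  then have "moeb \<gamma> q \<in> dirichlet_domain \<Gamma> p"
    by (rule nearest_orbit_point_in_dirichlet_domain[OF G H])
  then have "\<gamma> \<in> U_set \<Gamma> z0"
    using pq \<open>\<gamma> \<in> \<Gamma>\<close> unfolding U_set_def B_set_def by blast
  with nearest show "\<exists>\<gamma>\<in>U_set \<Gamma> z0. \<forall>g\<in>\<Gamma>. hdist p (moeb \<gamma> q) \<le> hdist p (moeb g q)"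
    by blast
qed

end
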